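(* Let $p\ge2$, $f\in\mathcal H_0$, $u$ the solution of $\partial_tu+\partial J(u)\ni0$, $u(0)=f$, and $\Lambda(t):=pJ(u(t))/\|u(t)\|^p$. Then for all $\delta>0$ and $t\ge\delta$: $$\|u(t)\|^2\ge\|u(\delta)\|^2\exp(-2\Lambda(\delta)(t-\delta))\quad\text{if }p=2,$$ $$\|u(t)\|^{p-2}\ge\frac{1}{\|u(\delta)\|^{2-p}+(p-2)\Lambda(\delta)(t-\delta)}\quad\text{if }p>2,$$ and $\delta=0$ is admissible if $J(f)<\infty$.
   Context: $\mathcal H$ is a real Hilbert space with inner product $\langle\cdot,\cdot\rangle$ and norm $\|\cdot\|$. $J:\mathcal H\to\mathbb R\cup\{\infty\}$ is convex, lower semicontinuous, proper, with dense effective domain, and absolutely $p$-homogeneous: $J(cu)=|c|^pJ(u)$ for $c\ne0$, $J(0)=0$. Standing coercivity assumption: $\lambda_1:=\inf_{u\in\mathcal H_0}pJ(u)/\|u\|^p>0$. $\partial J(u)=\{\zeta: J(u)+\langle\zeta,v-u\rangle\le J(v)\ \forall v\}$; $\mathcal N(J)=\{u:J(u)=0\}$; $\mathcal H_0:=\mathcal N(J)^\perp\setminus\{0\}$. The gradient flow solution (Brezis) is the unique continuous $u:[0,\infty)\to\mathcal H$, Lipschitz on $[\delta,\infty)$ for all $\delta>0$, right-differentiable on $(0,\infty)$ with $u(0)=f$ and $\partial_t^+u(t)=-\zeta(t)$, $\zeta(t)$ the minimal-norm element of $\partial J(u(t))$. (For $p\ge2$ one has $u(t)\neq0$ for all $t$,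 so $\Lambda$ is defined for all $t\ge0$, possibly $+\infty$ at $t=0$.) *)

theory Defs
  imports "HOL-Analysis.Analysis"
begin

text \<open>Functionals J : H -> R \<union> {\<infinity>} are modelled as maps into ereal
  (properness excludes the value -\<infinity>).\<close>

definition convex_functional :: "('a::real_vector \<Rightarrow> ereal) \<Rightarrow> bool" where
  "convex_functional J \<longleftrightarrow>
     (\<forall>x y (\<theta>::real). 0 \<le> \<theta> \<and> \<theta> \<le> 1 \<longrightarrow>
        J (\<theta> *\<^sub>R x + (1 - \<theta>) *\<^sub>R y) \<le> ereal \<theta> * J x + ereal (1 - \<theta>) * J y)"

definition lsc_functional :: "('a::topological_space \<Rightarrow> ereal) \<Rightarrow> bool" where
  "lsc_functional J \<longleftrightarrow> (\<forall>x. J x \<le> Liminf (at x) J)"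

definition proper_functional :: "('a \<Rightarrow> ereal) \<Rightarrow> bool" where
  "proper_functional J \<longleftrightarrow> (\<forall>x. J x \<noteq> -\<infinity>) \<and> (\<exists>x. J x \<noteq> \<infinity>)"

definition eff_dom :: "('a \<Rightarrow> ereal) \<Rightarrow> 'a set" where
  "eff_dom J = {x. J x < \<infinity>}"

definition abs_homogeneous :: "real \<Rightarrow> ('a::real_vector \<Rightarrow> ereal) \<Rightarrow> bool" where
  "abs_homogeneous p J \<longleftrightarrow>
     (\<forall>c u. c \<noteq> 0 \<longrightarrow> J (c *\<^sub>R u) = ereal (\<bar>c\<bar> powr p) * J u) \<and> J 0 = 0"

definition null_set :: "('a \<Rightarrow> ereal) \<Rightarrow> 'a set" where
  "null_set J = {u. J u = 0}"

definition H0 :: "('a::real_inner \<Rightarrow> ereal) \<Rightarrow> 'a set" where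
  "H0 J = {u. \<forall>v\<in>null_set J. inner u v = 0} - {0}"

definition lambda1 :: "real \<Rightarrow> ('a::real_inner \<Rightarrow> ereal) \<Rightarrow> ereal" where
  "lambda1 p J = (INF u\<in>H0 J. ereal p * J u / ereal (norm u powr p))"

definition subdiff :: "('a::real_inner \<Rightarrow> ereal) \<Rightarrow> 'a \<Rightarrow> 'a set" where
  "subdiff J u = {\<zeta>. \<forall>v. J u + ereal (inner \<zeta> (v - u)) \<le> J v}"

definition min_norm_elem :: "'a::real_normed_vector set \<Rightarrow> 'a \<Rightarrow> bool" where
  "min_norm_elem S \<zeta> \<longleftrightarrow> \<zeta> \<in> S \<and> (\<forall>\<xi>\<in>S. norm \<zeta> \<le> norm \<xi>)"

text \<open>Brezis gradient flow solution of u' + \<partial>J(u) \<ni> 0, u(0) = f.\<close>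
definition gradient_flow :: "('a::real_inner \<Rightarrow> ereal) \<Rightarrow> 'a \<Rightarrow> (real \<Rightarrow> 'a) \<Rightarrow> bool" where
  "gradient_flow J f u \<longleftrightarrow>
     continuous_on {0..} u \<and>
     (\<forall>\<delta>>0. \<exists>C. C-lipschitz_on {\<delta>..} u) \<and>
     u 0 = f \<and>
     (\<forall>t>0. \<exists>\<zeta>. min_norm_elem (subdiff J (u t)) \<zeta> \<and>
                 (u has_vector_derivative (- \<zeta>)) (at t within {t..}))"

definition rayleigh :: "real \<Rightarrow> ('a::real_normed_vector \<Rightarrow> ereal) \<Rightarrow> (real \<Rightarrow> 'a) \<Rightarrow> real \<Rightarrow> real" where
  "rayleigh p J u t = p * real_of_ereal (J (u t)) / norm (u t) powr p"

end

theory Submission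
  imports Defs
begin

text \<open>Along the flow the Rayleigh quotient \<open>\<Lambda>\<close> is nonincreasing: Euler's identity
  \<open>\<langle>\<zeta>, u\<rangle> = p J(u)\<close> gives \<open>d/dt \<parallel>u\<parallel>\<^sup>2 = -2 p J(u)\<close>, while \<open>J(u)\<close> has right derivative
  \<open>-\<parallel>\<zeta>\<parallel>\<^sup>2\<close>, and Cauchy-Schwarz makes the right derivative of \<open>\<Lambda>\<close> nonpositive. Hence
  \<open>\<parallel>u\<parallel>\<^sup>2\<close> (for \<open>p = 2\<close>) or \<open>\<parallel>u\<parallel>\<^sup>2\<^sup>-\<^sup>p\<close> (for \<open>p > 2\<close>) obeys a differential inequality with
  coefficient \<open>\<Lambda>(\<delta>)\<close>, which integrates to the bounds; the same comparison shows that \<open>u\<close>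
  never vanishes. Only right derivatives are available, so monotonicity is derived from right
  Dini derivatives. The right derivative of \<open>J(u)\<close> needs right continuity of the minimal-norm
  selection \<open>\<zeta>\<close>: \<open>\<zeta>(s)\<close> for \<open>s \<down> t\<close> is an approximate subgradient at \<open>u(t)\<close> of norm at most
  \<open>\<parallel>\<zeta>(t)\<parallel>\<close>, and in a Hilbert space such elements converge to the minimal-norm subgradient.
  For \<open>\<delta> = 0\<close> one adds \<open>J(u(\<epsilon>)) \<le> J(f)\<close> and lets \<open>\<epsilon> \<rightarrow> 0\<close>.\<close>

lemma lsc_right_slope_bound:
  fixes G :: "real \<Rightarrow> real"
  assumes ab: "a \<le> b"
    and lsc: "\<And>x y. x \<in> {a..b} \<Longrightarrow> y < G x \<Longrightarrow> \<forall>\<^sub>F s in at x within {a..b}. y < G s"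
    and slope: "\<And>x. x \<in> {a..<b} \<Longrightarrow> \<forall>\<^sub>F s in at_right x. G s \<le> G x + e * (s - x)"
    and e: "0 \<le> e"
  shows "G b \<le> G a + e * (b - a)"
proof -
  define S where "S = {s \<in> {a..b}. G s \<le> G a + e * (s - a)}"
  define m where "m = Sup S"
  have aS: "a \<in> S" and bdd: "bdd_above S" using ab by (auto simp: S_def bdd_above_def)
  have le_m: "s \<le> m" if "s \<in> S" for s using that bdd by (simp add: m_def cSup_upper)
  have am: "a \<le> m" and mb: "m \<le> b"
    using aS le_m unfolding m_def by (auto intro!: cSup_least simp: S_def)
  have mS: "m \<in> S"
  proof (rule ccontr)
    assume "m \<notin> S"
    hence "G a + e * (m - a) < G m" using am mb by (auto simp: S_def)
    from lsc[OF _ this] am mb obtain d where "d > 0"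
      and d: "\<And>s. s \<in> {a..b} \<Longrightarrow> s \<noteq> m \<Longrightarrow> dist s m < d \<Longrightarrow> G a + e * (m - a) < G s"
      by (auto simp: eventually_at)
    obtain s where s: "s \<in> S" "m - d < s"
      using less_cSup_iff[OF _ bdd, of "m - d"] aS \<open>d > 0\<close> by (auto simp: m_def)
    with \<open>m \<notin> S\<close> have "G a + e * (m - a) < G s" using le_m[OF s(1)]
      by (intro d) (auto simp: S_def dist_real_def)
    moreover have "e * (s - a) \<le> e * (m - a)" using le_m[OF s(1)] e by (simp add: mult_left_mono)
    ultimately show False using s(1) by (auto simp: S_def)
  qed
  have "m = b"
  proof (rule ccontr)
    assume "m \<noteq> b"
    with mb am have "\<forall>\<^sub>F s in at_right m. G s \<le> G m + e * (s - m)" by (intro slope) auto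
    then obtain b' where "b' > m" and b': "\<And>s. m < s \<Longrightarrow> s < b' \<Longrightarrow> G s \<le> G m + e * (s - m)"
      by (auto simp: eventually_at_right_field)
    define s where "s = (m + min b b') / 2"
    have s: "m < s" "s < b'" "s \<le> b" using \<open>b' > m\<close> \<open>m \<noteq> b\<close> mb by (auto simp: s_def)
    have "G s \<le> G a + e * (m - a) + e * (s - m)" using b'[OF s(1,2)] mS by (auto simp: S_def)
    hence "s \<in> S" using s am by (auto simp: S_def algebra_simps)
    thus False using le_m s(1) by fastforce
  qed
  thus ?thesis using mS by (simp add: S_def)
qed

lemma lsc_right_Dini_nonpos_imp_le:
  fixes G :: "real \<Rightarrow> real"
  assumes ab: "a \<le> b"
    and lsc: "\<And>x y. x \<in> {a..b} \<Longrightarrow> y < G x \<Longrightarrow> \<forall>\<^sub>F s in at x within {a..b}. y < G s"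
    and Dini: "\<And>x e. x \<in> {a..<b} \<Longrightarrow> e > 0 \<Longrightarrow> \<forall>\<^sub>F s in at_right x. G s \<le> G x + e * (s - x)"
  shows "G b \<le> G a"
proof (rule field_le_epsilon)
  fix e :: real assume "e > 0"
  have "G b \<le> G a + e / (b - a + 1) * (b - a)"
    using ab \<open>e > 0\<close> by (intro lsc_right_slope_bound lsc Dini) auto
  also have "e / (b - a + 1) * (b - a) \<le> e"
    using ab \<open>e > 0\<close> by (simp add: field_simps)
  finally show "G b \<le> G a + e" by simp
qed

lemma eventually_right_slope_le:
  fixes G Q :: "real \<Rightarrow> real"
  assumes "(Q \<longlongrightarrow> L) (at_right x)" "L < e"
    and "\<forall>\<^sub>F s in at_right x. G s - G x \<le> (s - x) * Q s"
  shows "\<forall>\<^sub>F s in at_right x. G s \<le> G x + e * (s - x)"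
  using order_tendstoD(2)[OF assms(1,2)] assms(3) eventually_at_right_less[of x]
proof eventually_elim
  case (elim s)
  hence "(s - x) * Q s \<le> (s - x) * e" by (intro mult_left_mono) auto
  thus ?case using elim by (simp add: algebra_simps)
qed

lemma right_derivative_nonpos_imp_le:
  fixes G G' :: "real \<Rightarrow> real"
  assumes ab: "a \<le> b" and cont: "continuous_on {a..b} G"
    and der: "\<And>x. x \<in> {a<..<b} \<Longrightarrow> (G has_real_derivative G' x) (at x within {x..})"
    and nonpos: "\<And>x. x \<in> {a<..<b} \<Longrightarrow> G' x \<le> 0"
  shows "G b \<le> G a"
proof (cases "a = b")
  case False
  have "G b \<le> G c" if c: "c \<in> {a<..<b}" for c
  proof (rule lsc_right_Dini_nonpos_imp_le[where G=G])
    fix x y assume "x \<in> {c..b}" "y < G x"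
    moreover have "continuous_on {c..b} G" using c by (intro continuous_on_subset[OF cont]) auto
    ultimately have "(G \<longlongrightarrow> G x) (at x within {c..b})" by (simp add: continuous_on_def)
    thus "\<forall>\<^sub>F s in at x within {c..b}. y < G s" using \<open>y < G x\<close> by (rule order_tendstoD(1))
  next
    fix x e :: real assume x: "x \<in> {c..<b}" and "e > 0"
    with c have "x \<in> {a<..<b}" by simp
    hence "((\<lambda>s. (G s - G x) / (s - x)) \<longlongrightarrow> G' x) (at_right x)"
      using der by (simp add: has_field_derivative_iff at_within_Ici_at_right)
    moreover have "G' x < e" using nonpos \<open>x \<in> {a<..<b}\<close> \<open>e > 0\<close> by fastforce
    moreover have "\<forall>\<^sub>F s in at_right x. G s - G x \<le> (s - x) * ((G s - G x) / (s - x))"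
      using eventually_at_right_less[of x] by eventually_elim simp
    ultimately show "\<forall>\<^sub>F s in at_right x. G s \<le> G x + e * (s - x)"
      by (rule eventually_right_slope_le)
  qed (use c in simp)
  hence "\<forall>\<^sub>F c in at_right a. G b \<le> G c"
    using eventually_at_right_real[of a b] ab False by (auto elim: eventually_mono)
  moreover have "(G \<longlongrightarrow> G a) (at_right a)" using continuous_on_Icc_at_rightD[OF cont] ab False by simp
  ultimately show ?thesis by (intro tendsto_lowerbound[of G _ "at_right a"]) auto
qed simp

lemma powr_eq_power2_powr:
  fixes x q :: real
  assumes "0 \<le> x"
  shows "x powr q = (x^2) powr (q / 2)"
proof (cases "x = 0")
  case False
  hence "(x^2) powr (q / 2) = (x powr 2) powr (q / 2)" using assms by (simp add: powr_numeral)
  also have "\<dots> = x powr q" by (simp add: powr_powr)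
  finally show ?thesis ..
qed simp

lemma one_div_le_powr_if_powr_neg_le:
  fixes x a B :: real
  assumes "0 < x" "x powr (- a) \<le> B"
  shows "1 / B \<le> x powr a"
  using le_imp_inverse_le[OF assms(2)] assms(1) by (simp add: powr_minus inverse_eq_divide)

lemma eventually_less_mult_lsc:
  fixes f h :: "'b \<Rightarrow> real"
  assumes f_lsc: "\<And>y. y < a \<Longrightarrow> \<forall>\<^sub>F s in F. y < f s" and h: "(h \<longlongrightarrow> b) F" "b > 0"
    and f_nonneg: "\<forall>\<^sub>F s in F. 0 \<le> f s" and y: "y < a * b"
  shows "\<forall>\<^sub>F s in F. y < f s * h s"
proof (cases "y < 0")
  case True
  from f_nonneg order_tendstoD(1)[OF h] show ?thesis
    by eventually_elim (use True in \<open>simp add: less_le_trans[OF True]\<close>)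
next
  case False
  hence "y / b < a" using y h(2) by (simp add: divide_less_eq mult.commute)
  then obtain c where c: "y / b < c" "c < a" using dense by blast
  have "c > 0" using c(1) False h(2) by (smt (verit) divide_nonneg_pos)
  hence "y / c < b" using c(1) h(2) by (simp add: divide_less_eq mult.commute)
  from f_lsc[OF c(2)] order_tendstoD(1)[OF h(1) this] show ?thesis
  proof eventually_elim
    case (elim s)
    hence "0 \<le> h s" using False \<open>c > 0\<close> by (smt (verit) divide_nonneg_pos)
    have "y = c * (y / c)" using \<open>c > 0\<close> by simp
    also have "\<dots> \<le> c * h s" using elim \<open>c > 0\<close> by (intro mult_left_mono) auto
    also have "\<dots> < f s * h s"
      using elim \<open>0 \<le> h s\<close> False \<open>c > 0\<close> \<open>y / c < h s\<close>
      by (smt (verit) divide_nonneg_pos mult_strict_right_mono)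
    finally show ?case .
  qed
qed

lemma has_vector_derivative_right_quotient:
  fixes f :: "real \<Rightarrow> 'b::real_normed_vector"
  assumes "(f has_vector_derivative f') (at t within {t..})"
  shows "((\<lambda>s. (1 / (s - t)) *\<^sub>R (f s - f t)) \<longlongrightarrow> f') (at_right t)"
proof -
  have "((\<lambda>y. (1 / \<bar>y - t\<bar>) *\<^sub>R (f y - (f t + (y - t) *\<^sub>R f'))) \<longlongrightarrow> 0) (at_right t)"
    using assms unfolding has_vector_derivative_def has_derivative_within at_within_Ici_at_right
    by simp
  hence "((\<lambda>y. (1 / \<bar>y - t\<bar>) *\<^sub>R (f y - (f t + (y - t) *\<^sub>R f')) + f') \<longlongrightarrow> 0 + f') (at_right t)"
    by (intro tendsto_intros)
  moreover have "\<forall>\<^sub>F y in at_right t. (1 / \<bar>y - t\<bar>) *\<^sub>R (f y - (f t + (y - t) *\<^sub>R f')) + f'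
      = (1 / (y - t)) *\<^sub>R (f y - f t)"
    using eventually_at_right_less[of t]
  proof eventually_elim
    case (elim y)
    hence "y / (y - t) = 1 + t / (y - t)" by (simp add: field_simps)
    hence "(y / (y - t)) *\<^sub>R f' = f' + (t / (y - t)) *\<^sub>R f'" by (simp add: scaleR_add_left)
    thus ?case using elim by (simp add: scaleR_diff_right divide_simps algebra_simps)
  qed
  ultimately show ?thesis by (simp add: tendsto_cong)
qed

lemma has_real_derivative_norm_sq:
  fixes w :: "real \<Rightarrow> 'b::real_inner"
  assumes "(w has_vector_derivative w') (at x within S)"
  shows "((\<lambda>r. norm (w r)^2) has_real_derivative 2 * (w x \<bullet> w')) (at x within S)"
proof -
  have w: "(w has_derivative (\<lambda>h. h *\<^sub>R w')) (at x within S)"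
    using assms by (simp add: has_vector_derivative_def)
  have "((\<lambda>r. w r \<bullet> w r) has_derivative (\<lambda>h. w x \<bullet> (h *\<^sub>R w') + (h *\<^sub>R w') \<bullet> w x)) (at x within S)"
    by (rule has_derivative_inner[OF w w])
  moreover have "(\<lambda>h. w x \<bullet> (h *\<^sub>R w') + (h *\<^sub>R w') \<bullet> w x) = (*) (2 * (w x \<bullet> w'))"
    by (auto simp: inner_commute algebra_simps)
  ultimately show ?thesis by (simp add: has_field_derivative_def power2_norm_eq_inner)
qed

lemma convex_norm_diff_sq_le_Inf_norm:
  fixes K :: "'a::real_inner set"
  assumes K: "convex K" and \<xi>: "\<xi>1 \<in> K" "\<xi>2 \<in> K"
  shows "norm (\<xi>1 - \<xi>2)^2 \<le> 2 * norm \<xi>1^2 + 2 * norm \<xi>2^2 - 4 * Inf (norm ` K)^2"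
proof -
  have "(1/2) *\<^sub>R \<xi>1 + (1/2) *\<^sub>R \<xi>2 \<in> K" using convexD[OF K \<xi>, of "1/2" "1/2"] by simp
  hence "Inf (norm ` K) \<le> norm ((1/2) *\<^sub>R (\<xi>1 + \<xi>2))"
    by (intro cInf_lower) (auto simp: scaleR_add_right intro: bdd_belowI[of _ 0])
  moreover have "0 \<le> Inf (norm ` K)" using \<xi> by (intro cInf_greatest) auto
  ultimately have "Inf (norm ` K)^2 \<le> norm ((1/2) *\<^sub>R (\<xi>1 + \<xi>2))^2" by (rule power_mono)
  moreover have "norm (\<xi>1 - \<xi>2)^2 = 2 * norm \<xi>1^2 + 2 * norm \<xi>2^2 - 4 * norm ((1/2) *\<^sub>R (\<xi>1 + \<xi>2))^2"
    by (simp add: power2_norm_eq_inner inner_add_left inner_add_right inner_diff_left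
        inner_diff_right inner_commute algebra_simps)
  ultimately show ?thesis by linarith
qed

lemma nested_convex_minimizing_Cauchy:
  fixes K :: "nat \<Rightarrow> 'a::real_inner set"
  assumes "decseq K" and convex: "\<And>n. convex (K n)" and \<eta>: "\<And>n. \<eta> n \<in> K n"
    and Inf_lim: "(\<lambda>n. Inf (norm ` K n)) \<longlonglongrightarrow> R" and norm_lim: "(\<lambda>n. norm (\<eta> n)) \<longlonglongrightarrow> R"
  shows "Cauchy \<eta>"
proof (rule metric_CauchyI)
  fix e :: real assume "e > 0"
  have "((\<lambda>n. Inf (norm ` K n)^2) \<longlonglongrightarrow> R^2)" "((\<lambda>n. norm (\<eta> n)^2) \<longlonglongrightarrow> R^2)"
    using Inf_lim norm_lim by (auto intro: tendsto_intros)
  hence "\<forall>\<^sub>F n in sequentially. R^2 - e^2/8 < Inf (norm ` K n)^2 \<and> norm (\<eta> n)^2 < R^2 + e^2/8"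
    using \<open>e > 0\<close> by (intro eventually_conj order_tendstoD(1,2)) auto
  then obtain M where M: "\<And>n. n \<ge> M \<Longrightarrow>
      R^2 - e^2/8 < Inf (norm ` K n)^2 \<and> norm (\<eta> n)^2 < R^2 + e^2/8"
    by (auto simp: eventually_sequentially)
  have close: "norm (\<eta> n - \<eta> k)^2 < e^2" if "M \<le> n" "n \<le> k" for n k
  proof -
    have "\<eta> k \<in> K n" using \<eta>[of k] \<open>decseq K\<close> \<open>n \<le> k\<close> by (auto simp: decseq_def)
    from convex_norm_diff_sq_le_Inf_norm[OF convex \<eta>[of n] this]
    show ?thesis using M[OF that(1)] M[OF le_trans[OF that]] by linarith
  qed
  show "\<exists>M. \<forall>m\<ge>M. \<forall>n\<ge>M. dist (\<eta> m) (\<eta> n) < e"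
  proof (intro exI allI impI)
    fix m n assume "M \<le> m" "M \<le> n"
    hence "dist (\<eta> m) (\<eta> n)^2 < e^2"
      using close[of m n] close[of n m] by (cases "m \<le> n") (auto simp: dist_norm norm_minus_commute)
    thus "dist (\<eta> m) (\<eta> n) < e" using \<open>e > 0\<close> by (simp add: power_less_imp_less_base)
  qed
qed

lemma decseq_closed_limit_in_Inter:
  assumes "decseq K" "\<And>n. closed (K n)" "\<And>n. \<eta> n \<in> K n" "\<eta> \<longlonglongrightarrow> \<xi>"
  shows "\<xi> \<in> (\<Inter>n. K n)"
proof
  fix n
  show "\<xi> \<in> K n"
  proof (rule closed_sequentially[OF assms(2)])
    show "(\<lambda>k. \<eta> (k + n)) \<longlonglongrightarrow> \<xi>" using assms(4) by (rule LIMSEQ_ignore_initial_segment)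
    show "\<eta> (k + n) \<in> K n" for k using assms(3) decseqD[OF assms(1)] by (meson le_add2 subsetD)
  qed
qed

lemma nested_convex_Inf_norm_tendsto:
  fixes K :: "nat \<Rightarrow> 'a::{real_inner,complete_space} set"
  assumes "decseq K" and convex: "\<And>n. convex (K n)" and closed: "\<And>n. closed (K n)"
    and \<zeta>: "min_norm_elem (\<Inter>n. K n) \<zeta>"
  shows "(\<lambda>n. Inf (norm ` K n)) \<longlonglongrightarrow> norm \<zeta>"
proof -
  define m where "m n = Inf (norm ` K n)" for n
  have \<zeta>K: "\<zeta> \<in> K n" for n using \<zeta> by (auto simp: min_norm_elem_def)
  have bdd: "bdd_below (norm ` K n)" for n by (auto intro: bdd_belowI[of _ 0])
  have m_le: "m n \<le> norm \<zeta>" for n unfolding m_def using \<zeta>K bdd by (intro cInf_lower) auto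
  have "incseq m" unfolding m_def incseq_def
  proof (intro allI impI)
    fix i j :: nat assume "i \<le> j"
    hence "norm ` K j \<subseteq> norm ` K i" using \<open>decseq K\<close> by (auto simp: decseq_def)
    thus "Inf (norm ` K i) \<le> Inf (norm ` K j)" using \<zeta>K bdd by (intro cInf_superset_mono) auto
  qed
  then obtain R where R: "m \<longlonglongrightarrow> R" "\<And>n. m n \<le> R"
    using incseq_convergent[of m "norm \<zeta>"] m_le by blast
  have "\<exists>\<eta>. \<eta> \<in> K n \<and> norm \<eta> < m n + inverse (Suc n)" for n
    using cInf_lessD[of "norm ` K n" "m n + inverse (Suc n)"] \<zeta>K by (auto simp: m_def)
  then obtain \<eta> where \<eta>: "\<And>n. \<eta> n \<in> K n" "\<And>n. norm (\<eta> n) < m n + inverse (Suc n)" by metis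
  have norm_\<eta>: "(\<lambda>n. norm (\<eta> n)) \<longlonglongrightarrow> R"
  proof (rule tendsto_sandwich[of m _ _ "\<lambda>n. m n + inverse (Suc n)"])
    show "\<forall>\<^sub>F n in sequentially. m n \<le> norm (\<eta> n)"
      using \<eta>(1) bdd by (auto simp: m_def intro!: cInf_lower always_eventually)
    show "(\<lambda>n. m n + inverse (Suc n)) \<longlonglongrightarrow> R"
      using tendsto_add[OF R(1) LIMSEQ_inverse_real_of_nat] by simp
    show "\<forall>\<^sub>F n in sequentially. norm (\<eta> n) \<le> m n + inverse (Suc n)"
      using \<eta>(2) by (intro always_eventually allI less_imp_le)
  qed (rule R(1))
  hence "Cauchy \<eta>"
    using R(1) \<eta>(1) unfolding m_def by (intro nested_convex_minimizing_Cauchy[OF \<open>decseq K\<close> convex])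
  then obtain \<xi> where lim: "\<eta> \<longlonglongrightarrow> \<xi>" using Cauchy_convergent_iff convergent_def by blast
  hence "norm \<zeta> \<le> norm \<xi>"
    using decseq_closed_limit_in_Inter[OF \<open>decseq K\<close> closed \<eta>(1)] \<zeta> by (auto simp: min_norm_elem_def)
  moreover have "norm \<xi> = R" using tendsto_norm[OF lim] norm_\<eta> by (rule LIMSEQ_unique)
  ultimately have "R = norm \<zeta>" using LIMSEQ_le_const2[OF R(1)] m_le by fastforce
  thus ?thesis using R(1) by (simp add: m_def[abs_def])
qed

lemma nested_convex_near_min_norm:
  fixes K :: "nat \<Rightarrow> 'a::{real_inner,complete_space} set"
  assumes "decseq K" and convex: "\<And>n. convex (K n)" and "\<And>n. closed (K n)"
    and \<zeta>: "min_norm_elem (\<Inter>n. K n) \<zeta>" and "r > 0"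
  shows "\<exists>n. \<forall>\<xi>\<in>K n. norm \<xi> \<le> norm \<zeta> \<longrightarrow> norm (\<xi> - \<zeta>) < r"
proof -
  have "(\<lambda>n. 4 * norm \<zeta>^2 - 4 * Inf (norm ` K n)^2) \<longlonglongrightarrow> 4 * norm \<zeta>^2 - 4 * norm \<zeta>^2"
    using nested_convex_Inf_norm_tendsto[OF assms(1-4)] by (intro tendsto_intros)
  hence "\<forall>\<^sub>F n in sequentially. 4 * norm \<zeta>^2 - 4 * Inf (norm ` K n)^2 < r^2"
    using \<open>r > 0\<close> by (intro order_tendstoD(2)) auto
  then obtain n where n: "4 * norm \<zeta>^2 - 4 * Inf (norm ` K n)^2 < r^2"
    by (auto simp: eventually_sequentially)
  have "norm (\<xi> - \<zeta>) < r" if "\<xi> \<in> K n" "norm \<xi> \<le> norm \<zeta>" for \<xi>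
  proof -
    have "\<zeta> \<in> K n" using \<zeta> by (auto simp: min_norm_elem_def)
    from convex_norm_diff_sq_le_Inf_norm[OF convex that(1) this]
    have "norm (\<xi> - \<zeta>)^2 \<le> 2 * norm \<xi>^2 + 2 * norm \<zeta>^2 - 4 * Inf (norm ` K n)^2" .
    moreover have "norm \<xi>^2 \<le> norm \<zeta>^2" using that(2) by (simp add: power_mono)
    ultimately have "norm (\<xi> - \<zeta>)^2 < r^2" using n by linarith
    thus ?thesis using \<open>r > 0\<close> by (simp add: power_less_imp_less_base)
  qed
  thus ?thesis by blast
qed

lemma abs_homogeneousD:
  "abs_homogeneous p J \<Longrightarrow> c \<noteq> 0 \<Longrightarrow> J (c *\<^sub>R u) = ereal (\<bar>c\<bar> powr p) * J u"
  by (simp add: abs_homogeneous_def)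

lemma convex_abs_homogeneous_nonneg:
  assumes conv: "convex_functional J" and hom: "abs_homogeneous p J"
  shows "0 \<le> J x"
proof -
  have "J ((1/2) *\<^sub>R x + (1 - 1/2) *\<^sub>R (-x)) \<le> ereal (1/2) * J x + ereal (1 - 1/2) * J (-x)"
    using conv[unfolded convex_functional_def, rule_format, of "1/2" x "-x"] by simp
  moreover have "J 0 = 0" using hom by (simp add: abs_homogeneous_def)
  moreover have "J (-x) = J x" using abs_homogeneousD[OF hom, of "-1" x] by simp
  moreover have "ereal (1/2) * J x + ereal (1/2) * J x = J x" by (cases "J x") auto
  ultimately show ?thesis by simp
qed

lemma subdiff_imp_finite:
  assumes "proper_functional J" "\<zeta> \<in> subdiff J x"
  obtains a where "J x = ereal a"
proof -
  obtain y where "J y \<noteq> \<infinity>" using assms(1) by (auto simp: proper_functional_def)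
  moreover have "J x + ereal (inner \<zeta> (y - x)) \<le> J y" using assms(2) by (auto simp: subdiff_def)
  moreover have "J x \<noteq> -\<infinity>" using assms(1) by (auto simp: proper_functional_def)
  ultimately show ?thesis using that by (cases "J x") auto
qed

lemma subdiff_real_le:
  assumes "\<zeta> \<in> subdiff J x" "J x = ereal a" "J v = ereal b"
  shows "a + inner \<zeta> (v - x) \<le> b"
  using assms by (auto simp: subdiff_def dest: spec[of _ v])

lemma subdiff_monotone:
  assumes "\<zeta>1 \<in> subdiff J x1" "J x1 = ereal a1" "\<zeta>2 \<in> subdiff J x2" "J x2 = ereal a2"
  shows "0 \<le> inner (\<zeta>1 - \<zeta>2) (x1 - x2)"
  using subdiff_real_le[OF assms(1,2,4)] subdiff_real_le[OF assms(3,4,2)]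
  by (simp add: inner_diff_left inner_diff_right algebra_simps)

text \<open>By the subgradient inequality, \<open>c \<mapsto> J (c x) - (c - 1) \<langle>\<zeta>, x\<rangle>\<close> is minimal at
  \<open>c = 1\<close>.\<close>
lemma subdiff_abs_homogeneous_inner:
  assumes hom: "abs_homogeneous p J" and sub: "\<zeta> \<in> subdiff J x" and Jx: "J x = ereal a"
  shows "inner \<zeta> x = p * a"
proof -
  define \<phi> where "\<phi> c = (c powr p - 1) * a - (c - 1) * inner \<zeta> x" for c :: real
  have "\<phi> 1 \<le> \<phi> c" if "c > 0" for c
  proof -
    have "J (c *\<^sub>R x) = ereal (c powr p * a)" using abs_homogeneousD[OF hom, of c x] that Jx by simp
    from subdiff_real_le[OF sub Jx this] show ?thesis
      by (simp add: \<phi>_def inner_diff_right algebra_simps)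
  qed
  moreover have "(\<phi> has_real_derivative (p * 1 powr (p - 1) * 1) * a - 1 * inner \<zeta> x) (at 1)"
    unfolding \<phi>_def by (auto intro!: derivative_eq_intros)
  ultimately have "(p * 1 powr (p - 1) * 1) * a - 1 * inner \<zeta> x = 0"
    by (intro DERIV_local_min[of _ _ _ 1]) auto
  thus ?thesis by simp
qed

lemma lsc_functional_tendsto:
  assumes lsc: "lsc_functional J" and lim: "(u \<longlongrightarrow> x) F" and y: "y < J x"
  shows "\<forall>\<^sub>F s in F. y < J (u s)"
proof -
  have "y < Liminf (at x) J" using lsc y unfolding lsc_functional_def by (metis less_le_trans)
  hence "\<forall>\<^sub>F x' in at x. y < J x'" by (rule less_LiminfD)
  then obtain S where S: "open S" "x \<in> S" "\<And>x'. x' \<in> S \<Longrightarrow> x' \<noteq> x \<Longrightarrow> y < J x'"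
    unfolding eventually_at_topological by blast
  have "\<forall>\<^sub>F s in F. u s \<in> S" using lim S(1,2) by (rule topological_tendstoD)
  thus ?thesis by eventually_elim (use S(3) y in fastforce)
qed

definition approx_subdiff :: "real \<Rightarrow> ('a::real_inner \<Rightarrow> ereal) \<Rightarrow> 'a \<Rightarrow> 'a set" where
  "approx_subdiff e J x = {\<xi>. \<forall>v. J x + ereal (inner \<xi> (v - x) - e) \<le> J v}"

lemma approx_subdiff_mono:
  assumes "e \<le> e'"
  shows "approx_subdiff e J x \<subseteq> approx_subdiff e' J x"
proof
  fix \<xi> assume "\<xi> \<in> approx_subdiff e J x"
  moreover have "J x + ereal (inner \<xi> (v - x) - e') \<le> J x + ereal (inner \<xi> (v - x) - e)" for v
    using assms by (intro add_left_mono) simp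
  ultimately show "\<xi> \<in> approx_subdiff e' J x"
    unfolding approx_subdiff_def by (blast intro: order_trans)
qed

lemma convex_approx_subdiff: "convex (approx_subdiff e J x)"
proof (rule convexI)
  fix \<xi>1 \<xi>2 and c1 c2 :: real
  assume \<xi>: "\<xi>1 \<in> approx_subdiff e J x" "\<xi>2 \<in> approx_subdiff e J x"
    and c: "0 \<le> c1" "0 \<le> c2" "c1 + c2 = 1"
  have "J x + ereal (inner (c1 *\<^sub>R \<xi>1 + c2 *\<^sub>R \<xi>2) (v - x) - e) \<le> J v" for v
  proof (cases "J x")
    case (real a)
    define A where "A \<xi> = a + (inner \<xi> (v - x) - e)" for \<xi>
    have A: "ereal (A \<xi>1) \<le> J v" "ereal (A \<xi>2) \<le> J v"
      using \<xi> real by (simp_all add: approx_subdiff_def A_def)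
    have "c2 = 1 - c1" using c(3) by simp
    hence "A (c1 *\<^sub>R \<xi>1 + c2 *\<^sub>R \<xi>2) = c1 * A \<xi>1 + c2 * A \<xi>2"
      by (simp only:) (simp add: A_def inner_add_left algebra_simps)
    moreover have "c1 * A \<xi>1 + c2 * A \<xi>2 \<le> J v"
      using A c by (cases "J v") (auto intro: convex_bound_le)
    ultimately show ?thesis using real by (simp add: A_def)
  qed (use \<xi> in \<open>auto simp: approx_subdiff_def split: if_splits\<close>)
  thus "c1 *\<^sub>R \<xi>1 + c2 *\<^sub>R \<xi>2 \<in> approx_subdiff e J x" by (simp add: approx_subdiff_def)
qed

lemma closed_approx_subdiff: "closed (approx_subdiff e J x)"
proof (cases "J x")
  case (real a)
  hence "approx_subdiff e J x = {\<xi>. \<forall>v. ereal (a + (inner \<xi> (v - x) - e)) \<le> J v}"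
    by (simp add: approx_subdiff_def)
  thus ?thesis by (auto intro!: closed_Collect_all closed_Collect_le continuous_intros continuous_on_ereal)
qed (auto simp: approx_subdiff_def)

lemma Inter_approx_subdiff:
  "(\<Inter>n. approx_subdiff (inverse (Suc n)) J x) = subdiff J x"
proof (intro equalityI subsetI)
  fix \<xi> assume \<xi>: "\<xi> \<in> (\<Inter>n. approx_subdiff (inverse (Suc n)) J x)"
  have "J x + ereal (inner \<xi> (v - x)) \<le> J v" for v
  proof (rule ereal_le_epsilon2)
    fix e :: real assume "e > 0"
    then obtain n where "inverse (Suc n) < e" by (metis nat_approx_posE inverse_eq_divide)
    moreover have "J x + ereal (inner \<xi> (v - x) - inverse (Suc n)) \<le> J v"
      using \<xi> by (auto simp: approx_subdiff_def)
    ultimately show "J x + ereal (inner \<xi> (v - x)) \<le> J v + ereal e"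
      by (cases "J x"; cases "J v") auto
  qed
  thus "\<xi> \<in> subdiff J x" by (simp add: subdiff_def)
next
  fix \<xi> assume "\<xi> \<in> subdiff J x"
  moreover have "subdiff J x \<subseteq> approx_subdiff (inverse (Suc n)) J x" for n
    using approx_subdiff_mono[of 0 "inverse (Suc n)" J x] by (simp add: approx_subdiff_def subdiff_def)
  ultimately show "\<xi> \<in> (\<Inter>n. approx_subdiff (inverse (Suc n)) J x)" by blast
qed

lemma approx_subdiff_near_min_norm:
  fixes J :: "'a::{real_inner,complete_space} \<Rightarrow> ereal"
  assumes \<zeta>: "min_norm_elem (subdiff J x) \<zeta>" and "r > 0"
  obtains e where "e > 0"
    "\<And>\<xi>. \<xi> \<in> approx_subdiff e J x \<Longrightarrow> norm \<xi> \<le> norm \<zeta> \<Longrightarrow> norm (\<xi> - \<zeta>) < r"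
proof -
  have "decseq (\<lambda>n. approx_subdiff (inverse (Suc n)) J x)"
    by (intro decseq_SucI approx_subdiff_mono) (simp add: field_simps)
  from nested_convex_near_min_norm[OF this convex_approx_subdiff closed_approx_subdiff
      \<zeta>[folded Inter_approx_subdiff] \<open>r > 0\<close>]
  show ?thesis using that[of "inverse (Suc n)" for n] by auto
qed

locale homogeneous_gradient_flow =
  fixes J :: "'a::{real_inner,complete_space} \<Rightarrow> ereal" and p :: real and u :: "real \<Rightarrow> 'a"
  assumes conv: "convex_functional J" and lsc: "lsc_functional J"
    and proper: "proper_functional J" and hom: "abs_homogeneous p J" and p_pos: "0 < p"
    and flow: "gradient_flow J (u 0) u"
begin

definition zeta :: "real \<Rightarrow> 'a" where
  "zeta t = (SOME \<zeta>. min_norm_elem (subdiff J (u t)) \<zeta> \<and>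
                     (u has_vector_derivative - \<zeta>) (at t within {t..}))"

definition energy :: "real \<Rightarrow> real" where
  "energy t = real_of_ereal (J (u t))"

abbreviation \<Lambda> :: "real \<Rightarrow> real" where
  "\<Lambda> \<equiv> rayleigh p J u"

lemma zeta_spec:
  assumes "t > 0"
  shows zeta_min_norm: "min_norm_elem (subdiff J (u t)) (zeta t)"
    and u_right_derivative: "(u has_vector_derivative - zeta t) (at t within {t..})"
proof -
  have "\<exists>\<zeta>. min_norm_elem (subdiff J (u t)) \<zeta> \<and> (u has_vector_derivative - \<zeta>) (at t within {t..})"
    using flow assms by (simp add: gradient_flow_def)
  from someI_ex[OF this] show "min_norm_elem (subdiff J (u t)) (zeta t)"
    and "(u has_vector_derivative - zeta t) (at t within {t..})"
    unfolding zeta_def by blast+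
qed

lemma zeta_subdiff: "t > 0 \<Longrightarrow> zeta t \<in> subdiff J (u t)"
  using zeta_min_norm by (simp add: min_norm_elem_def)

lemma J_u_eq_energy: "t > 0 \<Longrightarrow> J (u t) = ereal (energy t)"
  using subdiff_imp_finite[OF proper zeta_subdiff] by (metis energy_def real_of_ereal.simps(1))

lemma energy_nonneg: "0 \<le> energy t"
  using convex_abs_homogeneous_nonneg[OF conv hom] by (simp add: energy_def real_of_ereal_pos)

lemma inner_zeta_u: "t > 0 \<Longrightarrow> inner (zeta t) (u t) = p * energy t"
  using subdiff_abs_homogeneous_inner[OF hom zeta_subdiff J_u_eq_energy] .

lemma energy_subgradient: "s > 0 \<Longrightarrow> t > 0 \<Longrightarrow> energy s + inner (zeta s) (u t - u s) \<le> energy t"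
  using subdiff_real_le[OF zeta_subdiff J_u_eq_energy J_u_eq_energy] .

lemma rayleigh_eq: "\<Lambda> t = p * energy t / norm (u t) powr p"
  by (simp add: rayleigh_def energy_def)

lemma rayleigh_nonneg: "0 \<le> \<Lambda> t"
  using p_pos energy_nonneg by (simp add: rayleigh_eq)

lemma continuous_on_u: "continuous_on {0..} u"
  using flow by (simp add: gradient_flow_def)

lemma u_tendsto:
  assumes "t > 0"
  shows "(u \<longlongrightarrow> u t) (at t within S)"
proof -
  have "continuous_on {0<..} u" by (rule continuous_on_subset[OF continuous_on_u]) auto
  hence "isCont u t" using assms by (simp add: continuous_on_eq_continuous_at)
  thus ?thesis unfolding isCont_def by (rule tendsto_mono[OF at_le[OF subset_UNIV]])
qed

lemma u_tendsto_0: "(u \<longlongrightarrow> u 0) (at_right 0)"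
  using continuous_on_u by (simp add: continuous_on_def flip: at_within_Ici_at_right)

lemma u_right_quotient_tendsto:
  "t > 0 \<Longrightarrow> ((\<lambda>s. (1 / (s - t)) *\<^sub>R (u s - u t)) \<longlongrightarrow> - zeta t) (at_right t)"
  by (rule has_vector_derivative_right_quotient[OF u_right_derivative])

lemma shifted_u_right_derivative:
  assumes "r > 0" "h \<ge> 0"
  shows "((\<lambda>s. u (s + h)) has_vector_derivative - zeta (r + h)) (at r within {r..})"
proof -
  have "(\<lambda>s. s + h) ` {r..} = {r + h..}"
    by (auto intro: image_eqI[where x="_ - h"])
  hence "(u has_vector_derivative - zeta (r + h)) (at ((\<lambda>s. s + h) r) within (\<lambda>s. s + h) ` {r..})"
    using u_right_derivative[of "r + h"] assms by simp
  moreover have "((\<lambda>s. s + h) has_vector_derivative 1) (at r within {r..})"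
    by (auto intro!: derivative_eq_intros)
  ultimately show ?thesis using vector_diff_chain_within[of "\<lambda>s. s + h" 1 r "{r..}" u] by (simp add: o_def)
qed

text \<open>Monotonicity of the subdifferential makes the right derivative of
  \<open>r \<mapsto> \<parallel>u (r + h) - u r\<parallel>\<^sup>2\<close> nonpositive.\<close>
lemma increment_antimono:
  assumes "0 < t" "t \<le> s" "h > 0"
  shows "norm (u (s + h) - u s) \<le> norm (u (t + h) - u t)"
proof -
  define D where "D r = norm (u (r + h) - u r)^2" for r
  have "D s \<le> D t"
  proof (rule right_derivative_nonpos_imp_le[OF \<open>t \<le> s\<close>])
    have "continuous_on {t..s} (\<lambda>r. u (r + h))"
      by (rule continuous_on_compose2[OF continuous_on_u continuous_on_add[OF continuous_on_id
          continuous_on_const]]) (use assms in auto)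
    moreover have "continuous_on {t..s} u" by (rule continuous_on_subset[OF continuous_on_u]) (use assms in auto)
    ultimately show "continuous_on {t..s} D" unfolding D_def by (intro continuous_intros)
    fix r assume "r \<in> {t<..<s}"
    hence "r > 0" using assms by simp
    have "((\<lambda>r. u (r + h) - u r) has_vector_derivative - zeta (r + h) - - zeta r) (at r within {r..})"
      using \<open>r > 0\<close> \<open>h > 0\<close>
      by (intro has_vector_derivative_diff shifted_u_right_derivative u_right_derivative) auto
    thus "(D has_real_derivative 2 * ((u (r + h) - u r) \<bullet> (- zeta (r + h) - - zeta r))) (at r within {r..})"
      unfolding D_def by (rule has_real_derivative_norm_sq)
    have "0 \<le> (zeta (r + h) - zeta r) \<bullet> (u (r + h) - u r)"
      using \<open>r > 0\<close> \<open>h > 0\<close>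
      by (intro subdiff_monotone[OF zeta_subdiff J_u_eq_energy zeta_subdiff J_u_eq_energy]) auto
    moreover have "- zeta (r + h) - - zeta r = - (zeta (r + h) - zeta r)" by simp
    ultimately show "2 * ((u (r + h) - u r) \<bullet> (- zeta (r + h) - - zeta r)) \<le> 0"
      by (simp only: inner_minus_right inner_commute[of "u (r + h) - u r"])
  qed
  thus ?thesis unfolding D_def by (rule power2_le_imp_le) simp
qed

lemma norm_zeta_antimono:
  assumes "0 < t" "t \<le> s"
  shows "norm (zeta s) \<le> norm (zeta t)"
proof -
  have lim: "((\<lambda>h. norm ((1 / h) *\<^sub>R (u (r + h) - u r))) \<longlongrightarrow> norm (zeta r)) (at_right 0)"
    if "r > 0" for r
    using tendsto_norm[OF u_right_quotient_tendsto[OF that]]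
    by (subst (asm) filterlim_at_right_to_0) (simp add: add.commute)
  show ?thesis
  proof (rule tendsto_le[OF _ lim lim])
    show "\<forall>\<^sub>F h in at_right 0. norm ((1 / h) *\<^sub>R (u (s + h) - u s)) \<le> norm ((1 / h) *\<^sub>R (u (t + h) - u t))"
      using eventually_at_right_less[of 0]
      by eventually_elim (use increment_antimono[OF assms] in \<open>simp add: divide_right_mono\<close>)
  qed (use assms in auto)
qed

lemma energy_lsc:
  assumes "x > 0" "y < energy x"
  shows "\<forall>\<^sub>F s in at x within S. y < energy s"
proof -
  have "\<forall>\<^sub>F s in at x within S. ereal y < J (u s)"
    using assms by (intro lsc_functional_tendsto[OF lsc u_tendsto]) (auto simp: J_u_eq_energy)
  moreover have "\<forall>\<^sub>F s in at x within S. 0 < s"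
    using order_tendstoD(1)[OF tendsto_ident_at \<open>x > 0\<close>] .
  ultimately show ?thesis by eventually_elim (simp add: J_u_eq_energy)
qed

lemma energy_le_plus_increment:
  assumes "0 < t" "t \<le> s"
  shows "energy s \<le> energy t + norm (zeta t) * norm (u s - u t)"
proof -
  have "inner (zeta s) (u s - u t) \<le> norm (zeta s) * norm (u s - u t)" by (rule norm_cauchy_schwarz)
  also have "\<dots> \<le> norm (zeta t) * norm (u s - u t)"
    using norm_zeta_antimono[OF assms] by (simp add: mult_right_mono)
  finally show ?thesis
    using energy_subgradient[of s t] assms by (simp add: inner_diff_right)
qed

lemma energy_right_continuous:
  assumes "t > 0"
  shows "(energy \<longlongrightarrow> energy t) (at_right t)"
proof (rule order_tendstoI)
  fix y assume "y < energy t"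
  thus "\<forall>\<^sub>F s in at_right t. y < energy s" using energy_lsc[OF assms] by blast
next
  fix y assume "y > energy t"
  have "((\<lambda>s. energy t + norm (zeta t) * norm (u s - u t)) \<longlongrightarrow> energy t + norm (zeta t) * norm (u t - u t))
      (at_right t)"
    by (intro tendsto_intros u_tendsto[OF assms])
  hence "\<forall>\<^sub>F s in at_right t. energy t + norm (zeta t) * norm (u s - u t) < y"
    using \<open>y > energy t\<close> by (intro order_tendstoD(2)) auto
  with eventually_at_right_less[of t] show "\<forall>\<^sub>F s in at_right t. energy s < y"
  proof eventually_elim
    case (elim s)
    with energy_le_plus_increment[of t s] assms show ?case by linarith
  qed
qed

text \<open>For \<open>s > t\<close>, \<open>zeta s\<close> is an approximate subgradient at \<open>u t\<close> whose error tends
  to 0 and whose norm is at most \<open>\<parallel>zeta t\<parallel>\<close>; such subgradients approach the minimal-norm one.\<close>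
lemma zeta_right_continuous:
  assumes "t > 0"
  shows "(zeta \<longlongrightarrow> zeta t) (at_right t)"
proof (rule tendstoI)
  fix r :: real assume "r > 0"
  obtain e where "e > 0" and near: "\<And>\<xi>. \<xi> \<in> approx_subdiff e J (u t) \<Longrightarrow>
      norm \<xi> \<le> norm (zeta t) \<Longrightarrow> norm (\<xi> - zeta t) < r"
    using approx_subdiff_near_min_norm[OF zeta_min_norm[OF assms] \<open>r > 0\<close>] by blast
  define E where "E s = energy t - energy s + inner (zeta s) (u s - u t)" for s
  have "((\<lambda>s. (energy t - energy s) + norm (zeta t) * norm (u s - u t))
      \<longlongrightarrow> (energy t - energy t) + norm (zeta t) * norm (u t - u t)) (at_right t)"
    by (intro tendsto_intros energy_right_continuous[OF assms] u_tendsto[OF assms])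
  hence "\<forall>\<^sub>F s in at_right t. (energy t - energy s) + norm (zeta t) * norm (u s - u t) < e"
    using \<open>e > 0\<close> by (intro order_tendstoD(2)) auto
  with eventually_at_right_less[of t] show "\<forall>\<^sub>F s in at_right t. dist (zeta s) (zeta t) < r"
  proof eventually_elim
    case (elim s)
    have "inner (zeta s) (u s - u t) \<le> norm (zeta t) * norm (u s - u t)"
      using norm_cauchy_schwarz[of "zeta s"] norm_zeta_antimono[of t s] assms elim
      by (smt (verit) mult_right_mono norm_ge_zero)
    hence "E s < e" using elim by (simp add: E_def)
    moreover have "zeta s \<in> approx_subdiff (E s) J (u t)"
    proof -
      have "J (u t) + ereal (inner (zeta s) (v - u t) - E s) = J (u s) + ereal (inner (zeta s) (v - u s))"
        for v using assms elim by (simp add: J_u_eq_energy E_def inner_diff_right)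
      thus ?thesis using zeta_subdiff[of s] assms elim by (simp add: approx_subdiff_def subdiff_def)
    qed
    ultimately have "zeta s \<in> approx_subdiff e J (u t)"
      using approx_subdiff_mono[of "E s" e] by auto
    thus ?case using near norm_zeta_antimono[of t s] assms elim by (simp add: dist_norm)
  qed
qed

lemma inner_zeta_right_quotient_tendsto:
  "t > 0 \<Longrightarrow> ((\<lambda>s. inner (zeta s) ((1 / (s - t)) *\<^sub>R (u s - u t))) \<longlongrightarrow> - (norm (zeta t)^2)) (at_right t)"
  using tendsto_inner[OF zeta_right_continuous u_right_quotient_tendsto]
  by (simp add: power2_norm_eq_inner)

lemma energy_diff_le_quotient:
  assumes "0 < t" "t < s"
  shows "energy s - energy t \<le> (s - t) * inner (zeta s) ((1 / (s - t)) *\<^sub>R (u s - u t))"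
  using energy_subgradient[of s t] assms by (simp add: inner_diff_right)

lemma energy_antimono:
  assumes "0 < a" "a \<le> b"
  shows "energy b \<le> energy a"
proof (rule lsc_right_Dini_nonpos_imp_le[OF \<open>a \<le> b\<close>])
  fix x y assume "x \<in> {a..b}" "y < energy x"
  thus "\<forall>\<^sub>F s in at x within {a..b}. y < energy s" using assms by (intro energy_lsc) auto
next
  fix x e :: real assume "x \<in> {a..<b}" "e > 0"
  hence "x > 0" using assms by simp
  show "\<forall>\<^sub>F s in at_right x. energy s \<le> energy x + e * (s - x)"
  proof (rule eventually_right_slope_le[OF inner_zeta_right_quotient_tendsto[OF \<open>x > 0\<close>]])
    show "- (norm (zeta x)^2) < e" using \<open>e > 0\<close> by (smt (verit) zero_le_power2)
    show "\<forall>\<^sub>F s in at_right x. energy s - energy x \<le> (s - x) * inner (zeta s) ((1 / (s - x)) *\<^sub>R (u s - u x))"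
      using eventually_at_right_less[of x] by eventually_elim (use energy_diff_le_quotient \<open>x > 0\<close> in auto)
  qed
qed

lemma norm_sq_u_right_derivative:
  "t > 0 \<Longrightarrow> ((\<lambda>s. norm (u s)^2) has_real_derivative - 2 * p * energy t) (at t within {t..})"
  using has_real_derivative_norm_sq[OF u_right_derivative, of t] inner_zeta_u[of t]
  by (simp add: inner_commute mult.assoc)

lemma norm_powr_u_right_derivative:
  assumes "t > 0" "u t \<noteq> 0"
  shows "((\<lambda>s. norm (u s) powr q) has_real_derivative - q * \<Lambda> t * norm (u t) powr (q + p - 2))
      (at t within {t..})"
proof -
  define n where "n = norm (u t)"
  have "n > 0" using assms by (simp add: n_def)
  hence "norm (u t)^2 > 0" by (simp add: n_def)
  from DERIV_chain'[OF norm_sq_u_right_derivative[OF assms(1)] has_real_derivative_powr[OF this, of "q / 2"]]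
  have "((\<lambda>s. (norm (u s)^2) powr (q / 2)) has_real_derivative
      (q / 2 * (n^2) powr (q / 2 - 1)) * (- 2 * p * energy t)) (at t within {t..})"
    by (simp add: n_def)
  moreover have "(n^2) powr (q / 2 - 1) = n powr (q + p - 2) / n powr p"
    using \<open>n > 0\<close> by (simp add: powr_eq_power2_powr[of n "q - 2", symmetric] powr_diff[symmetric]
        field_simps)
  ultimately show ?thesis
    by (simp add: powr_eq_power2_powr[symmetric] rayleigh_eq n_def field_simps)
qed

lemma rayleigh_eq_powr: "\<Lambda> t = p * energy t * norm (u t) powr (- p)"
  by (simp add: rayleigh_eq powr_minus_divide)

lemma rayleigh_lsc:
  assumes "x > 0" "u x \<noteq> 0" "y < \<Lambda> x"
  shows "\<forall>\<^sub>F s in at x within S. y < \<Lambda> s"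
proof -
  have "\<forall>\<^sub>F s in at x within S. y < p * energy s * norm (u s) powr (- p)"
  proof (rule eventually_less_mult_lsc)
    fix y' assume "y' < p * energy x"
    hence "y' / p < energy x" using p_pos by (simp add: divide_less_eq mult.commute)
    from energy_lsc[OF \<open>x > 0\<close> this] show "\<forall>\<^sub>F s in at x within S. y' < p * energy s"
      by eventually_elim (use p_pos in \<open>simp add: divide_less_eq mult.commute\<close>)
  next
    show "((\<lambda>s. norm (u s) powr (- p)) \<longlongrightarrow> norm (u x) powr (- p)) (at x within S)"
      using assms by (intro tendsto_intros u_tendsto) auto
  qed (use assms p_pos energy_nonneg in \<open>auto simp: rayleigh_eq_powr\<close>)
  thus ?thesis by (simp add: rayleigh_eq_powr)
qed

text \<open>The left-hand side is the right derivative of \<open>\<Lambda>\<close>, equal to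
  \<open>p \<parallel>u\<parallel>\<^sup>-\<^sup>p ((p J(u))\<^sup>2 / \<parallel>u\<parallel>\<^sup>2 - \<parallel>\<zeta>\<parallel>\<^sup>2)\<close>; apply Cauchy-Schwarz to \<open>p J(u) = \<langle>\<zeta>, u\<rangle>\<close>.\<close>
lemma rayleigh_right_slope_nonpos:
  assumes "t > 0" "u t \<noteq> 0"
  shows "- p * norm (zeta t)^2 * norm (u t) powr (- p)
      + p * energy t * (p * \<Lambda> t * norm (u t) powr (- 2)) \<le> 0"
proof -
  define n where "n = norm (u t)"
  have "n > 0" using assms by (simp add: n_def)
  have "\<bar>p * energy t\<bar> \<le> norm (zeta t) * n"
    using Cauchy_Schwarz_ineq2[of "zeta t" "u t"] inner_zeta_u[OF assms(1)] by (simp add: n_def)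
  hence "(p * energy t)^2 \<le> (norm (zeta t) * n)^2"
    by (metis abs_ge_zero power2_abs power_mono)
  hence "(p * energy t)^2 / n^2 - norm (zeta t)^2 \<le> 0"
    using \<open>n > 0\<close> by (simp add: divide_le_eq power_mult_distrib)
  moreover have "- p * norm (zeta t)^2 * n powr (- p) + p * energy t * (p * \<Lambda> t * n powr (- 2))
      = p * n powr (- p) * ((p * energy t)^2 / n^2 - norm (zeta t)^2)"
    using \<open>n > 0\<close> by (simp add: rayleigh_eq_powr n_def powr_minus_divide power2_eq_square field_simps)
  ultimately show ?thesis using p_pos
    by (simp add: n_def mult_nonneg_nonpos)
qed

lemma rayleigh_right_Dini_nonpos:
  assumes "t > 0" "u t \<noteq> 0" "e > 0"
  shows "\<forall>\<^sub>F s in at_right t. \<Lambda> s \<le> \<Lambda> t + e * (s - t)"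
proof -
  define I where "I s = norm (u s) powr (- p)" for s
  define I' where "I' = p * \<Lambda> t * norm (u t) powr (- 2)"
  have I: "(I has_real_derivative I') (at t within {t..})"
    using norm_powr_u_right_derivative[OF assms(1,2), of "- p"] by (simp add: I_def[abs_def] I'_def)
  define B where "B s = p * inner (zeta s) ((1 / (s - t)) *\<^sub>R (u s - u t)) * I s
      + p * energy t * ((I s - I t) / (s - t))" for s
  show ?thesis
  proof (rule eventually_right_slope_le)
    have "((\<lambda>s. (I s - I t) / (s - t)) \<longlongrightarrow> I') (at_right t)"
      using I by (simp add: has_field_derivative_iff at_within_Ici_at_right)
    moreover have "(I \<longlongrightarrow> I t) (at_right t)"
      using DERIV_continuous[OF I] by (simp add: continuous_within at_within_Ici_at_right)
    ultimately show "(B \<longlongrightarrow> p * - (norm (zeta t)^2) * I t + p * energy t * I') (at_right t)"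
      unfolding B_def by (intro tendsto_intros inner_zeta_right_quotient_tendsto[OF assms(1)])
    show "p * - (norm (zeta t)^2) * I t + p * energy t * I' < e"
      using rayleigh_right_slope_nonpos[OF assms(1,2)] assms(3) by (simp add: I_def I'_def)
    show "\<forall>\<^sub>F s in at_right t. \<Lambda> s - \<Lambda> t \<le> (s - t) * B s"
      using eventually_at_right_less[of t]
    proof eventually_elim
      case (elim s)
      have "p * (energy s - energy t) * I s \<le> p * inner (zeta s) (u s - u t) * I s"
        using energy_subgradient[of s t] assms(1) elim p_pos
        by (intro mult_right_mono mult_left_mono) (auto simp: I_def inner_diff_right)
      moreover have "(s - t) * B s = p * ((s - t) * inner (zeta s) ((1 / (s - t)) *\<^sub>R (u s - u t))) * I s
          + p * energy t * ((s - t) * ((I s - I t) / (s - t)))"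
        by (simp add: B_def algebra_simps)
      hence "(s - t) * B s = p * inner (zeta s) (u s - u t) * I s + p * energy t * (I s - I t)"
        using elim by (simp add: inner_scaleR_right)
      moreover have "\<Lambda> s - \<Lambda> t = p * (energy s - energy t) * I s + p * energy t * (I s - I t)"
        by (simp add: rayleigh_eq_powr I_def algebra_simps)
      ultimately show ?case by linarith
    qed
  qed
qed

lemma rayleigh_antimono:
  assumes "0 < a" "a \<le> b" and nonzero: "\<And>s. s \<in> {a..b} \<Longrightarrow> u s \<noteq> 0"
  shows "\<Lambda> b \<le> \<Lambda> a"
proof (rule lsc_right_Dini_nonpos_imp_le[OF \<open>a \<le> b\<close>])
  fix x y assume "x \<in> {a..b}" "y < \<Lambda> x"
  thus "\<forall>\<^sub>F s in at x within {a..b}. y < \<Lambda> s" using assms by (intro rayleigh_lsc) auto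
next
  fix x e :: real assume "x \<in> {a..<b}" "e > 0"
  thus "\<forall>\<^sub>F s in at_right x. \<Lambda> s \<le> \<Lambda> x + e * (s - x)"
    using assms by (intro rayleigh_right_Dini_nonpos) auto
qed

lemma norm_sq_lower_bound_p2:
  assumes "p = 2" "0 \<le> a" "a \<le> t" and nonzero: "\<And>s. s \<in> {a..t} \<Longrightarrow> u s \<noteq> 0"
    and bound: "\<And>s. s \<in> {a<..t} \<Longrightarrow> \<Lambda> s \<le> L"
  shows "norm (u a)^2 * exp (- 2 * L * (t - a)) \<le> norm (u t)^2"
proof -
  define E where "E r = exp (2 * L * (r - a))" for r
  have "- (norm (u t)^2 * E t) \<le> - (norm (u a)^2 * E a)"
  proof (rule right_derivative_nonpos_imp_le[OF \<open>a \<le> t\<close>])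
    show "continuous_on {a..t} (\<lambda>r. - (norm (u r)^2 * E r))"
      using \<open>0 \<le> a\<close> unfolding E_def
      by (auto intro!: continuous_intros continuous_on_subset[OF continuous_on_u])
    fix r assume r: "r \<in> {a<..<t}"
    hence "r > 0" "u r \<noteq> 0" using assms by auto
    have "(E has_real_derivative E r * (2 * L)) (at r within {r..})"
      unfolding E_def by (auto intro!: derivative_eq_intros)
    from DERIV_minus[OF DERIV_mult[OF norm_sq_u_right_derivative[OF \<open>r > 0\<close>] this]]
    show "((\<lambda>r. - (norm (u r)^2 * E r)) has_real_derivative
        - (- 2 * p * energy r * E r + norm (u r)^2 * (E r * (2 * L)))) (at r within {r..})"
      by (simp add: mult_ac)
    have "p * energy r = \<Lambda> r * norm (u r)^2"
      unfolding rayleigh_eq using \<open>u r \<noteq> 0\<close> \<open>p = 2\<close> by (simp add: powr_numeral)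
    also have "\<dots> \<le> L * norm (u r)^2" using bound[of r] r by (simp add: mult_right_mono)
    finally have "0 \<le> 2 * E r * (L * norm (u r)^2 - p * energy r)" by (simp add: E_def)
    thus "- (- 2 * p * energy r * E r + norm (u r)^2 * (E r * (2 * L))) \<le> 0"
      by (simp add: algebra_simps)
  qed
  hence "norm (u a)^2 * exp (- 2 * L * (t - a))
      \<le> norm (u t)^2 * exp (2 * L * (t - a)) * exp (- 2 * L * (t - a))"
    by (intro mult_right_mono) (auto simp: E_def)
  thus ?thesis by (simp add: mult.assoc flip: exp_add)
qed

lemma norm_powr_upper_bound_p_gt2:
  assumes "p > 2" "0 \<le> a" "a \<le> t" and nonzero: "\<And>s. s \<in> {a..t} \<Longrightarrow> u s \<noteq> 0"
    and bound: "\<And>s. s \<in> {a<..t} \<Longrightarrow> \<Lambda> s \<le> L"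
  shows "norm (u t) powr (2 - p) \<le> norm (u a) powr (2 - p) + (p - 2) * L * (t - a)"
proof -
  define \<Phi> where "\<Phi> r = norm (u r) powr (2 - p) - (p - 2) * L * (r - a)" for r
  have "\<Phi> t \<le> \<Phi> a"
  proof (rule right_derivative_nonpos_imp_le[OF \<open>a \<le> t\<close>])
    show "continuous_on {a..t} \<Phi>"
      using nonzero \<open>0 \<le> a\<close> unfolding \<Phi>_def
      by (auto intro!: continuous_intros continuous_on_subset[OF continuous_on_u])
    fix r assume r: "r \<in> {a<..<t}"
    hence "r > 0" "u r \<noteq> 0" using assms by auto
    have "(\<Phi> has_real_derivative
        - (2 - p) * \<Lambda> r * norm (u r) powr (2 - p + p - 2) - (p - 2) * L * 1) (at r within {r..})"
      unfolding \<Phi>_def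
      by (intro DERIV_diff norm_powr_u_right_derivative[OF \<open>r > 0\<close> \<open>u r \<noteq> 0\<close>] DERIV_cmult)
        (auto intro!: derivative_eq_intros)
    thus "(\<Phi> has_real_derivative (p - 2) * (\<Lambda> r - L)) (at r within {r..})"
      using \<open>u r \<noteq> 0\<close> by (simp add: algebra_simps)
    show "(p - 2) * (\<Lambda> r - L) \<le> 0" using bound[of r] r \<open>p > 2\<close> by (simp add: mult_nonneg_nonpos)
  qed
  thus ?thesis by (simp add: \<Phi>_def)
qed

lemma norm_bounded_below:
  assumes "2 \<le> p" "0 < a" "a < b" and nonzero: "\<And>s. s \<in> {a..<b} \<Longrightarrow> u s \<noteq> 0"
  obtains m where "m > 0" "\<And>s. s \<in> {a..<b} \<Longrightarrow> m \<le> norm (u s)"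
proof -
  have nonzero_on: "\<And>r. r \<in> {a..s} \<Longrightarrow> u r \<noteq> 0" and bound: "\<And>r. r \<in> {a<..s} \<Longrightarrow> \<Lambda> r \<le> \<Lambda> a"
    if "s \<in> {a..<b}" for s
    using that assms(2) nonzero by (auto intro!: rayleigh_antimono)
  have "u a \<noteq> 0" using nonzero assms(3) by simp
  show ?thesis
  proof (cases "p = 2")
    case True
    define m where "m = norm (u a) * exp (- \<Lambda> a * (b - a))"
    show ?thesis
    proof (rule that[of m])
      show "m > 0" using \<open>u a \<noteq> 0\<close> by (simp add: m_def)
      fix s assume s: "s \<in> {a..<b}"
      have "m^2 = norm (u a)^2 * exp (- 2 * \<Lambda> a * (b - a))"
        by (simp add: m_def power_mult_distrib flip: exp_of_nat_mult)
      also have "\<dots> \<le> norm (u a)^2 * exp (- 2 * \<Lambda> a * (s - a))"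
        using s rayleigh_nonneg[of a] by (intro mult_left_mono) (auto simp: mult_left_mono)
      also have "\<dots> \<le> norm (u s)^2"
        using s assms(2) by (intro norm_sq_lower_bound_p2[OF True] nonzero_on[OF s] bound[OF s]) auto
      finally show "m \<le> norm (u s)" by (rule power2_le_imp_le) simp
    qed
  next
    case False
    hence "p > 2" using assms(1) by simp
    define B where "B = norm (u a) powr (2 - p) + (p - 2) * \<Lambda> a * (b - a)"
    have "B > 0" using \<open>u a \<noteq> 0\<close> \<open>p > 2\<close> rayleigh_nonneg[of a] assms(3)
      by (simp add: B_def add_pos_nonneg)
    show ?thesis
    proof (rule that[of "B powr (1 / (2 - p))"])
      show "B powr (1 / (2 - p)) > 0" using \<open>B > 0\<close> by simp
      fix s assume s: "s \<in> {a..<b}"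
      have "norm (u s) powr (2 - p) \<le> norm (u a) powr (2 - p) + (p - 2) * \<Lambda> a * (s - a)"
        using s assms(2) by (intro norm_powr_upper_bound_p_gt2[OF \<open>p > 2\<close>] nonzero_on[OF s] bound[OF s]) auto
      also have "\<dots> \<le> B"
        using s \<open>p > 2\<close> rayleigh_nonneg[of a] by (simp add: B_def mult_left_mono)
      finally have "B powr (1 / (2 - p)) \<le> (norm (u s) powr (2 - p)) powr (1 / (2 - p))"
        using \<open>p > 2\<close> nonzero[OF s] by (intro powr_mono2') auto
      thus "B powr (1 / (2 - p)) \<le> norm (u s)" using \<open>p > 2\<close> by (simp add: powr_powr)
    qed
  qed
qed

text \<open>Up to the first zero of \<open>u\<close> the Rayleigh quotient is nonincreasing, which by the comparison
  lemmas keeps \<open>\<parallel>u\<parallel>\<close> bounded away from 0.\<close>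
lemma u_nonzero:
  assumes "2 \<le> p" "u 0 \<noteq> 0" "0 \<le> t"
  shows "u t \<noteq> 0"
proof
  assume "u t = 0"
  define Z where "Z = {s \<in> {0..}. u s = 0}"
  have "closed Z" unfolding Z_def
    by (rule continuous_closed_preimage_constant[OF continuous_on_u]) simp
  moreover have "t \<in> Z" "bdd_below Z" using \<open>u t = 0\<close> assms by (auto simp: Z_def bdd_below_def)
  ultimately have "Inf Z \<in> Z" by (intro closed_contains_Inf) auto
  define T where "T = Inf Z"
  have "T > 0" "u T = 0" using \<open>Inf Z \<in> Z\<close> assms(2) by (auto simp: Z_def T_def less_le)
  have "u s \<noteq> 0" if "s \<in> {T/2..<T}" for s
    using that cInf_lower[OF _ \<open>bdd_below Z\<close>, of s] \<open>T > 0\<close> by (auto simp: Z_def T_def)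
  then obtain m where "m > 0" and m: "\<And>s. s \<in> {T/2..<T} \<Longrightarrow> m \<le> norm (u s)"
    using norm_bounded_below[OF assms(1), of "T/2" T] \<open>T > 0\<close> by auto
  have "((\<lambda>s. norm (u s)) \<longlongrightarrow> norm (u T)) (at_left T)"
    by (intro tendsto_norm u_tendsto \<open>T > 0\<close>)
  moreover have "\<forall>\<^sub>F s in at_left T. m \<le> norm (u s)"
    using eventually_at_left_real[of "T/2" T] \<open>T > 0\<close> by (auto elim!: eventually_mono intro: m)
  ultimately have "m \<le> norm (u T)" by (intro tendsto_lowerbound) auto
  thus False using \<open>m > 0\<close> \<open>u T = 0\<close> by simp
qed

text \<open>Integrate \<open>d/dr \<parallel>u r - u 0\<parallel>\<^sup>2/2 = \<langle>zeta r, u 0 - u r\<rangle> \<le> J (u 0) - J (u r) \<le> J (u 0) - J (u \<epsilon>)\<close>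
  over \<open>]0, \<epsilon>]\<close>.\<close>
lemma energy_le_initial:
  assumes "J (u 0) = ereal c" "\<epsilon> > 0"
  shows "energy \<epsilon> \<le> c"
proof -
  define F where "F \<eta> r = norm (u r - u 0)^2 / 2 - (r - \<eta>) * (c - energy \<epsilon>)" for \<eta> r
  have "F \<eta> \<epsilon> \<le> F \<eta> \<eta>" if "\<eta> \<in> {0<..<\<epsilon>}" for \<eta>
  proof (rule right_derivative_nonpos_imp_le[where G="F \<eta>"])
    show "continuous_on {\<eta>..\<epsilon>} (F \<eta>)" unfolding F_def
      using that by (auto intro!: continuous_intros continuous_on_subset[OF continuous_on_u])
    fix r assume r: "r \<in> {\<eta><..<\<epsilon>}"
    hence "r > 0" using that by simp
    have "((\<lambda>r. u r - u 0) has_vector_derivative - zeta r) (at r within {r..})"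
      using has_vector_derivative_diff[OF u_right_derivative[OF \<open>r > 0\<close>] has_vector_derivative_const]
      by simp
    from DERIV_cdivide[OF has_real_derivative_norm_sq[OF this], of 2]
    have "((\<lambda>r. norm (u r - u 0)^2 / 2) has_real_derivative (2 * ((u r - u 0) \<bullet> - zeta r)) / 2)
        (at r within {r..})" .
    moreover have "((\<lambda>r. (r - \<eta>) * (c - energy \<epsilon>)) has_real_derivative 1 * (c - energy \<epsilon>))
        (at r within {r..})"
      by (auto intro!: derivative_eq_intros)
    ultimately show "(F \<eta> has_real_derivative (2 * ((u r - u 0) \<bullet> - zeta r)) / 2 - 1 * (c - energy \<epsilon>))
        (at r within {r..})"
      unfolding F_def[abs_def] by (rule DERIV_diff)
    have "energy r + inner (zeta r) (u 0 - u r) \<le> c"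
      by (rule subdiff_real_le[OF zeta_subdiff[OF \<open>r > 0\<close>] J_u_eq_energy[OF \<open>r > 0\<close>] assms(1)])
    moreover have "energy \<epsilon> \<le> energy r" using r \<open>r > 0\<close> by (intro energy_antimono) auto
    ultimately show "(2 * ((u r - u 0) \<bullet> - zeta r)) / 2 - 1 * (c - energy \<epsilon>) \<le> 0"
      by (simp add: inner_commute inner_diff_left inner_diff_right)
  qed (use that in auto)
  moreover have "((\<lambda>\<eta>. F \<eta> \<epsilon>) \<longlongrightarrow> F 0 \<epsilon>) (at_right 0)" "((\<lambda>\<eta>. F \<eta> \<eta>) \<longlongrightarrow> F 0 0) (at_right 0)"
    unfolding F_def by (intro tendsto_intros u_tendsto_0 | simp)+
  ultimately have "F 0 \<epsilon> \<le> F 0 0"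
    using eventually_at_right_real[OF assms(2)]
    by (intro tendsto_le[of "at_right 0" "\<lambda>\<eta>. F \<eta> \<eta>" _ "\<lambda>\<eta>. F \<eta> \<epsilon>"]) (auto elim: eventually_mono)
  hence "norm (u \<epsilon> - u 0)^2 / 2 \<le> \<epsilon> * (c - energy \<epsilon>)" by (simp add: F_def)
  hence "0 \<le> \<epsilon> * (c - energy \<epsilon>)" by (smt (verit) zero_le_power2 divide_nonneg_nonneg)
  thus ?thesis using assms(2) by (simp add: zero_le_mult_iff)
qed

lemma rayleigh_le_initial:
  assumes "2 \<le> p" "u 0 \<noteq> 0" "J (u 0) < \<infinity>" "s > 0"
  shows "\<Lambda> s \<le> \<Lambda> 0"
proof -
  have "0 \<le> J (u 0)" by (rule convex_abs_homogeneous_nonneg[OF conv hom])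
  with assms(3) obtain c where c: "J (u 0) = ereal c" by (cases "J (u 0)") simp_all
  have bound: "\<Lambda> s \<le> p * c / norm (u \<eta>) powr p" if "\<eta> \<in> {0<..<s}" for \<eta>
  proof -
    have "u r \<noteq> 0" if "r \<in> {\<eta>..s}" for r
      using u_nonzero[OF assms(1,2)] that \<open>\<eta> \<in> {0<..<s}\<close> by simp
    hence "\<Lambda> s \<le> \<Lambda> \<eta>" using that by (intro rayleigh_antimono) auto
    also have "\<dots> \<le> p * c / norm (u \<eta>) powr p" unfolding rayleigh_eq
      using energy_le_initial[OF c, of \<eta>] that p_pos
      by (intro divide_right_mono mult_left_mono) simp_all
    finally show ?thesis .
  qed
  have "\<forall>\<^sub>F \<eta> in at_right 0. \<eta> \<in> {0<..<s}" by (rule eventually_at_right_real[OF assms(4)])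
  hence "\<forall>\<^sub>F \<eta> in at_right 0. \<Lambda> s \<le> p * c / norm (u \<eta>) powr p"
    by eventually_elim (rule bound)
  moreover have "((\<lambda>\<eta>. p * c / norm (u \<eta>) powr p) \<longlongrightarrow> p * c / norm (u 0) powr p) (at_right 0)"
    using assms(2) by (intro tendsto_intros u_tendsto_0) simp_all
  ultimately have "\<Lambda> s \<le> p * c / norm (u 0) powr p"
    by (intro tendsto_lowerbound[of _ _ "at_right 0"]) auto
  thus ?thesis by (simp add: rayleigh_eq energy_def c)
qed

lemma rayleigh_le_start:
  assumes "2 \<le> p" "u 0 \<noteq> 0" "0 < \<delta> \<or> (\<delta> = 0 \<and> J (u 0) < \<infinity>)" "\<delta> < s"
  shows "\<Lambda> s \<le> \<Lambda> \<delta>"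
  using assms(3)
proof
  assume "0 < \<delta>"
  thus ?thesis using assms(4) u_nonzero[OF assms(1,2)] by (intro rayleigh_antimono) auto
next
  assume "\<delta> = 0 \<and> J (u 0) < \<infinity>"
  thus ?thesis using rayleigh_le_initial[OF assms(1,2)] assms(4) by auto
qed

end

theorem corollary2:
  fixes J :: "'a::{real_inner, complete_space} \<Rightarrow> ereal"
    and p :: real and f :: 'a and u :: "real \<Rightarrow> 'a" and \<delta> t :: real
  assumes conv: "convex_functional J"
    and lsc: "lsc_functional J"
    and proper: "proper_functional J"
    and dense: "closure (eff_dom J) = UNIV"
    and hom: "abs_homogeneous p J"
    and coerc: "lambda1 p J > 0"
    and p2: "p \<ge> 2"
    and fH0: "f \<in> H0 J"
    and flow: "gradient_flow J f u"
    and delta: "\<delta> > 0 \<or> (\<delta> = 0 \<and> J f < \<infinity>)"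
    and tge: "t \<ge> \<delta>"
  shows "(p = 2 \<longrightarrow>
            norm (u t) ^ 2 \<ge> norm (u \<delta>) ^ 2 * exp (- 2 * rayleigh p J u \<delta> * (t - \<delta>)))
       \<and> (p > 2 \<longrightarrow>
            norm (u t) powr (p - 2) \<ge>
              1 / (norm (u \<delta>) powr (2 - p) + (p - 2) * rayleigh p J u \<delta> * (t - \<delta>)))"
proof -
  have u0: "u 0 = f" and "u 0 \<noteq> 0" using flow fH0 by (auto simp: gradient_flow_def H0_def)
  interpret homogeneous_gradient_flow J p u
    using conv lsc proper hom p2 flow u0 by unfold_locales auto
  have "0 \<le> \<delta>" using delta by auto
  have nonzero: "u s \<noteq> 0" if "s \<in> {\<delta>..t}" for s
    using u_nonzero[OF p2 \<open>u 0 \<noteq> 0\<close>] that \<open>0 \<le> \<delta>\<close> by simp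
  have bound: "\<Lambda> s \<le> \<Lambda> \<delta>" if "s \<in> {\<delta><..t}" for s
    using rayleigh_le_start[OF p2 \<open>u 0 \<noteq> 0\<close>] delta u0 that by auto
  show ?thesis
  proof (intro conjI impI)
    assume "p = 2"
    from norm_sq_lower_bound_p2[OF this \<open>0 \<le> \<delta>\<close> tge nonzero bound]
    show "norm (u \<delta>)^2 * exp (- 2 * \<Lambda> \<delta> * (t - \<delta>)) \<le> norm (u t)^2" .
  next
    assume "p > 2"
    from norm_powr_upper_bound_p_gt2[OF this \<open>0 \<le> \<delta>\<close> tge nonzero bound]
    show "1 / (norm (u \<delta>) powr (2 - p) + (p - 2) * \<Lambda> \<delta> * (t - \<delta>)) \<le> norm (u t) powr (p - 2)"
      using one_div_le_powr_if_powr_neg_le[of "norm (u t)" "p - 2"] nonzero[of t] tge by simp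
  qed
qed

end
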